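(* Let $\mathcal{M}$ and $\mathcal{M}'$ be ergodic Markov chains on the same finite state space $\Omega$, and let $f$ be an $(\mathcal{M},\mathcal{M}')$-flow such that $\kappa(f)<\infty$. Then there is an $(\mathcal{M},\mathcal{M}')$-flow $f'$ with $A(f')\le 8\,\kappa(f)\,B(f)$.
   Context: A (discrete-time) Markov chain on a finite state space $\Omega$ with transition matrix $P$ is ergodic if irreducible and aperiodic; it then has a unique stationary distribution $\pi>0$. Let $\mathcal{M}$ have transition matrix $P$ and stationary distribution $\pi$, and $\mathcal{M}'$ have transition matrix $P'$ and stationary distribution $\pi'$. Let $E^*(\mathcal{M})=\{(x,y): P(x,y)>0\}$ (pairs not necessarily distinct), similarly $E^*(\mathcal{M}')$. For $(x,y)\in E^*(\mathcal{M}')$, $\mathcal{P}_{x,y}$ is the set of paths $\gamma=(x=x_0,\dots,x_k=y)$ with each $(x_i,x_{i+1})\in E^*(\mathcal{M})$ and each $(z,w)\in E^*(\mathcal{M})$ appearing at most twice as a consecutive pair on $\gamma$; $|\gamma|=k$. $\mathcal{P}=\bigcup_{(x,y)\in E^*(\mathcal{M}')}\mathcal{P}_{x,y}$. An $(\mathcal{M},\mathcal{M}')$-flow is $f:\mathcal{P}\to[0,1]$ with $\sum_{\gamma\in\mathcal{P}_{x,y}}f(\gamma)=\pi'(x)P'(x,y)$ for all $(x,y)\in E^*(\mathcal{M}')$. With $r((z,w),\gamma)$ the number of times $(z,w)$ appears on $\gamma$, the edge congestion is $A_{z,w}(f)=\frac{1}{\pi(z)P(z,w)}\sum_{\gamma:(z,w)\in\gamma}r((z,w),\gamma)|\gamma|f(\gamma)$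 and $A(f)=\max_{(z,w)\in E^*(\mathcal{M})}A_{z,w}(f)$. The state congestion of $z\in\Omega$ is $B_z(f)=\frac{1}{\pi(z)}\sum_{\gamma\in\mathcal{P}: z\in\gamma}|\gamma|f(\gamma)$ (sum over paths visiting $z$), and $B(f)=\max_{z}B_z(f)$. The time-reversal has transition matrix $R(P)(w,x)=\pi(x)P(x,w)/\pi(w)$. Define $\kappa(f)=\max_{(z,w):A_{z,w}(f)>0}\left(\sum_{x\in\Omega}\min\{P(z,x),R(P)(w,x)\}\right)^{-1}$ (with $1/0=\infty$). *)

theory Defs
  imports "HOL-Analysis.Analysis" "HOL-Library.Extended_Real"
begin

fun mpow :: "('a::finite \<Rightarrow> 'a \<Rightarrow> real) \<Rightarrow> nat \<Rightarrow> 'a \<Rightarrow> 'a \<Rightarrow> real" where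
  "mpow P 0 = (\<lambda>x y. if x = y then 1 else 0)"
| "mpow P (Suc n) = (\<lambda>x y. \<Sum>z\<in>UNIV. mpow P n x z * P z y)"

definition stochastic :: "('a::finite \<Rightarrow> 'a \<Rightarrow> real) \<Rightarrow> bool" where
  "stochastic P \<longleftrightarrow> (\<forall>x y. 0 \<le> P x y) \<and> (\<forall>x. (\<Sum>y\<in>UNIV. P x y) = 1)"

definition irreducible_chain :: "('a::finite \<Rightarrow> 'a \<Rightarrow> real) \<Rightarrow> bool" where
  "irreducible_chain P \<longleftrightarrow> (\<forall>x y. \<exists>n. mpow P n x y > 0)"

definition aperiodic_chain :: "('a::finite \<Rightarrow> 'a \<Rightarrow> real) \<Rightarrow> bool" where
  "aperiodic_chain P \<longleftrightarrow> (\<forall>x. Gcd {n::nat. n \<ge> 1 \<and> mpow P n x x > 0} = 1)"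

definition ergodic :: "('a::finite \<Rightarrow> 'a \<Rightarrow> real) \<Rightarrow> bool" where
  "ergodic P \<longleftrightarrow> stochastic P \<and> irreducible_chain P \<and> aperiodic_chain P"

definition stationary :: "('a::finite \<Rightarrow> 'a \<Rightarrow> real) \<Rightarrow> ('a \<Rightarrow> real) \<Rightarrow> bool" where
  "stationary P mu \<longleftrightarrow> (\<forall>x. 0 \<le> mu x) \<and> (\<Sum>x\<in>UNIV. mu x) = 1
     \<and> (\<forall>y. (\<Sum>x\<in>UNIV. mu x * P x y) = mu y)"

definition edges :: "'a list \<Rightarrow> ('a \<times> 'a) list" where
  "edges g = zip g (tl g)"

definition plen :: "'a list \<Rightarrow> nat" where
  "plen g = length g - 1"

definition paths :: "('a::finite \<Rightarrow> 'a \<Rightarrow> real) \<Rightarrow> 'a \<Rightarrow> 'a \<Rightarrow> 'a list set" where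
  "paths P x y = {g. g \<noteq> [] \<and> hd g = x \<and> last g = y
      \<and> (\<forall>e\<in>set (edges g). P (fst e) (snd e) > 0)
      \<and> (\<forall>e. count_list (edges g) e \<le> 2)}"

definition allpaths :: "('a::finite \<Rightarrow> 'a \<Rightarrow> real) \<Rightarrow> ('a \<Rightarrow> 'a \<Rightarrow> real) \<Rightarrow> 'a list set" where
  "allpaths P P' = (\<Union>(x,y)\<in>{(x,y). P' x y > 0}. paths P x y)"

definition is_flow :: "('a::finite \<Rightarrow> 'a \<Rightarrow> real) \<Rightarrow> ('a \<Rightarrow> 'a \<Rightarrow> real) \<Rightarrow> ('a \<Rightarrow> real)
    \<Rightarrow> ('a list \<Rightarrow> real) \<Rightarrow> bool" where
  "is_flow P P' mu' f \<longleftrightarrow> (\<forall>g\<in>allpaths P P'. 0 \<le> f g \<and> f g \<le> 1)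
     \<and> (\<forall>x y. P' x y > 0 \<longrightarrow> (\<Sum>g\<in>paths P x y. f g) = mu' x * P' x y)"

definition congA_edge :: "('a::finite \<Rightarrow> 'a \<Rightarrow> real) \<Rightarrow> ('a \<Rightarrow> real) \<Rightarrow> ('a \<Rightarrow> 'a \<Rightarrow> real)
    \<Rightarrow> ('a list \<Rightarrow> real) \<Rightarrow> 'a \<Rightarrow> 'a \<Rightarrow> real" where
  "congA_edge P mu P' f z w = (1 / (mu z * P z w)) *
     (\<Sum>g\<in>{g\<in>allpaths P P'. (z,w) \<in> set (edges g)}.
        real (count_list (edges g) (z,w)) * real (plen g) * f g)"

definition congA :: "('a::finite \<Rightarrow> 'a \<Rightarrow> real) \<Rightarrow> ('a \<Rightarrow> real) \<Rightarrow> ('a \<Rightarrow> 'a \<Rightarrow> real)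
    \<Rightarrow> ('a list \<Rightarrow> real) \<Rightarrow> real" where
  "congA P mu P' f = Max ((\<lambda>(z,w). congA_edge P mu P' f z w) ` {(z,w). P z w > 0})"

definition congB_state :: "('a::finite \<Rightarrow> 'a \<Rightarrow> real) \<Rightarrow> ('a \<Rightarrow> real) \<Rightarrow> ('a \<Rightarrow> 'a \<Rightarrow> real)
    \<Rightarrow> ('a list \<Rightarrow> real) \<Rightarrow> 'a \<Rightarrow> real" where
  "congB_state P mu P' f z = (1 / mu z) *
     (\<Sum>g\<in>{g\<in>allpaths P P'. z \<in> set g}. real (plen g) * f g)"

definition congB :: "('a::finite \<Rightarrow> 'a \<Rightarrow> real) \<Rightarrow> ('a \<Rightarrow> real) \<Rightarrow> ('a \<Rightarrow> 'a \<Rightarrow> real)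
    \<Rightarrow> ('a list \<Rightarrow> real) \<Rightarrow> real" where
  "congB P mu P' f = Max (range (congB_state P mu P' f))"

definition reversal :: "('a::finite \<Rightarrow> 'a \<Rightarrow> real) \<Rightarrow> ('a \<Rightarrow> real) \<Rightarrow> 'a \<Rightarrow> 'a \<Rightarrow> real" where
  "reversal P mu w x = mu x * P x w / mu w"

definition einv :: "real \<Rightarrow> ereal" where
  "einv s = (if s = 0 then \<infinity> else ereal (1 / s))"

text \<open>kappa(f); the maximum over an empty index set is taken to be 0.\<close>
definition kappa :: "('a::finite \<Rightarrow> 'a \<Rightarrow> real) \<Rightarrow> ('a \<Rightarrow> real) \<Rightarrow> ('a \<Rightarrow> 'a \<Rightarrow> real)
    \<Rightarrow> ('a list \<Rightarrow> real) \<Rightarrow> ereal" where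
  "kappa P mu P' f = Sup ({0} \<union>
     {einv (\<Sum>x\<in>UNIV. min (P z x) (reversal P mu w x)) | z w.
        P z w > 0 \<and> congA_edge P mu P' f z w > 0})"

end

theory Submission
  imports Defs
begin

(* Every flow path \<gamma> is first loop-erased into a simple path h with the same end points that
   uses only edges of \<gamma>. If f(\<gamma>) > 0, each edge (v, w) of h has positive congestion A_{v,w}(f),
   so by the definition of \<kappa>(f) the mass s(v, w) = \<Sum>x. min (P v x) (R(P) w x) is at least
   1/\<kappa>(f). The edge is replaced by the two-step path v \<rightarrow> x \<rightarrow> w, where x is drawn with
   probability min (P v x) (R(P) w x) / s(v, w); this probability is at most \<kappa>(f) P(v, x) and at
   most \<kappa>(f) R(P)(w, x), and both v \<rightarrow> x and x \<rightarrow> w are edges of P. As h is simple, an edge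
   (a, b) of the new path can only come from the edge of h leaving a or the edge of h entering b,
   so its expected multiplicity is at most \<kappa>(f) (P(a, b) [a \<in> \<gamma>] + R(P)(b, a) [b \<in> \<gamma>]), while
   lengths at most double. Summing over \<gamma> against the state congestions and using
   \<pi>(b) R(P)(b, a) = \<pi>(a) P(a, b) gives A(f') \<le> 4 \<kappa>(f) B(f), which is stronger than the
   claimed bound. *)

section \<open>Paths and loop erasure\<close>

lemma edges_Nil [simp]: "edges [] = []"
  by (simp add: edges_def)

lemma edges_single [simp]: "edges [x] = []"
  by (simp add: edges_def)

lemma edges_Cons_Cons [simp]: "edges (x # y # zs) = (x, y) # edges (y # zs)"
  by (simp add: edges_def)

lemma length_edges: "length (edges g) = length g - 1"
  by (simp add: edges_def)

lemma edges_snoc: "g \<noteq> [] \<Longrightarrow> edges (g @ [y]) = edges g @ [(last g, y)]"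
  by (induction g rule: induct_list012) auto

text \<open>Chronological loop erasure: when the walk returns to a vertex \<open>y\<close>, the loop since the earlier
  visit of \<open>y\<close> is cut away.\<close>

definition loop_erase :: "'a list \<Rightarrow> 'a list" where
  "loop_erase g = foldl (\<lambda>p y. takeWhile (\<lambda>z. z \<noteq> y) p @ [y]) [] g"

lemma loop_erase_Nil [simp]: "loop_erase [] = []"
  by (simp add: loop_erase_def)

lemma loop_erase_snoc [simp]:
  "loop_erase (g @ [y]) = takeWhile (\<lambda>z. z \<noteq> y) (loop_erase g) @ [y]"
  by (simp add: loop_erase_def)

lemma loop_erase_single [simp]: "loop_erase [y] = [y]"
  by (simp add: loop_erase_def)

lemma loop_erase_eq_Nil_iff [simp]: "loop_erase g = [] \<longleftrightarrow> g = []"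
  by (induction g rule: rev_induct) auto

lemma last_loop_erase: "g \<noteq> [] \<Longrightarrow> last (loop_erase g) = last g"
  by (induction g rule: rev_induct) auto

lemma hd_loop_erase: "g \<noteq> [] \<Longrightarrow> hd (loop_erase g) = hd g"
proof (induction g rule: rev_induct)
  case (snoc y g)
  then show ?case
    by (cases "g = []"; cases "loop_erase g") auto
qed simp

lemma set_loop_erase_subset: "set (loop_erase g) \<subseteq> set g"
  by (induction g rule: rev_induct) (auto dest: set_takeWhileD)

lemma distinct_loop_erase: "distinct (loop_erase g)"
  by (induction g rule: rev_induct) (auto dest: set_takeWhileD)

lemma length_loop_erase_le: "length (loop_erase g) \<le> length g"
  by (induction g rule: rev_induct) (auto intro: le_trans[OF length_takeWhile_le])

lemma edges_takeWhile_snoc: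
  "p \<noteq> [] \<Longrightarrow> set (edges (takeWhile (\<lambda>z. z \<noteq> y) p @ [y])) \<subseteq> insert (last p, y) (set (edges p))"
  by (induction p rule: induct_list012) auto

lemma edges_loop_erase_subset: "set (edges (loop_erase g)) \<subseteq> set (edges g)"
proof (induction g rule: rev_induct)
  case (snoc y g)
  show ?case
  proof (cases "g = []")
    case False
    then show ?thesis
      using edges_takeWhile_snoc[of "loop_erase g" y] snoc.IH
      by (auto simp: edges_snoc last_loop_erase)
  qed simp
qed simp

lemma distinct_count_list: "distinct xs \<Longrightarrow> count_list xs x = of_bool (x \<in> set xs)"
  by (induction xs) auto

lemma count_butlast_loop_erase_le: "count_list (butlast (loop_erase g)) x \<le> of_bool (x \<in> set g)"
  using distinct_loop_erase[of g] set_loop_erase_subset[of g]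
  by (auto simp: distinct_count_list distinct_butlast dest: in_set_butlastD)

lemma count_tl_loop_erase_le: "count_list (tl (loop_erase g)) x \<le> of_bool (x \<in> set g)"
  using distinct_loop_erase[of g] set_loop_erase_subset[of g]
  by (cases "loop_erase g") (auto simp: distinct_count_list)

section \<open>Random subdivision of a path\<close>

text \<open>\<^term>\<open>subdiv_prob q h t\<close> is the probability of obtaining \<open>t\<close> from the path \<open>h\<close> when every
  edge \<open>(v, w)\<close> of \<open>h\<close> is independently replaced by \<open>v, x, w\<close> with \<open>x\<close> drawn from \<open>q v w\<close>.\<close>

fun subdiv_prob :: "('a \<Rightarrow> 'a \<Rightarrow> 'a \<Rightarrow> real) \<Rightarrow> 'a list \<Rightarrow> 'a list \<Rightarrow> real" where
  "subdiv_prob q [] t = 0"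
| "subdiv_prob q [v] t = of_bool (t = [v])"
| "subdiv_prob q (v # w # h) t =
     (case t of v' # x # t' \<Rightarrow> if v' = v then q v w x * subdiv_prob q (w # h) t' else 0 | _ \<Rightarrow> 0)"

lemma subdiv_prob_nonneg: "(\<And>v w x. 0 \<le> q v w x) \<Longrightarrow> 0 \<le> subdiv_prob q h t"
  by (induction q h t rule: subdiv_prob.induct) (auto split: list.split)

lemma subdiv_prob_nonzeroD:
  "subdiv_prob q h t \<noteq> 0 \<Longrightarrow>
     t \<noteq> [] \<and> hd t = hd h \<and> last t = last h \<and> length t = 2 * length h - 1"
proof (induction q h t rule: subdiv_prob.induct)
  case (3 q v w h t)
  then obtain x t' where "t = v # x # t'" "subdiv_prob q (w # h) t' \<noteq> 0"
    by (auto split: list.splits if_splits)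
  with "3.IH" show ?case by auto
qed auto

lemma subdiv_prob_Cons_Cons_nonzeroD:
  assumes "subdiv_prob q (v # w # h) t \<noteq> 0"
  obtains x t' where "t = v # x # w # t'" "q v w x \<noteq> 0" "subdiv_prob q (w # h) (w # t') \<noteq> 0"
proof -
  obtain x t' where t: "t = v # x # t'" and "q v w x \<noteq> 0" and W: "subdiv_prob q (w # h) t' \<noteq> 0"
    using assms by (auto split: list.splits if_splits)
  moreover obtain t'' where "t' = w # t''"
    using subdiv_prob_nonzeroD[OF W] by (cases t') auto
  ultimately show thesis using that by blast
qed

lemma edges_subdiv_probD:
  assumes "subdiv_prob q h t \<noteq> 0" and "(a, b) \<in> set (edges t)"
  shows "\<exists>v w. (v, w) \<in> set (edges h) \<and> (a = v \<and> q v w b \<noteq> 0 \<or> b = w \<and> q v w a \<noteq> 0)"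
  using assms
proof (induction q h t rule: subdiv_prob.induct)
  case (3 q v w h t)
  then obtain x t' where t: "t = v # x # w # t'" and "q v w x \<noteq> 0"
    and W: "subdiv_prob q (w # h) (w # t') \<noteq> 0"
    by (elim subdiv_prob_Cons_Cons_nonzeroD)
  with "3.prems"(2) consider "(a, b) = (v, x)" | "(a, b) = (x, w)" | "(a, b) \<in> set (edges (w # t'))"
    by auto
  then show ?case
  proof cases
    case 3
    with "3.IH"[of v "x # w # t'" x "w # t'"] t W show ?thesis
      by (cases h) auto
  qed (use \<open>q v w x \<noteq> 0\<close> in auto)
qed auto

lemma count_edges_subdiv_le:
  "subdiv_prob q h t \<noteq> 0 \<Longrightarrow>
     count_list (edges t) (a, b) \<le> count_list (butlast h) a + count_list (tl h) b"
proof (induction q h t rule: subdiv_prob.induct)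
  case (3 q v w h t)
  then obtain x t' where t: "t = v # x # w # t'" and W: "subdiv_prob q (w # h) (w # t') \<noteq> 0"
    by (elim subdiv_prob_Cons_Cons_nonzeroD)
  with "3.IH"[of v "x # w # t'" x "w # t'"] show ?case
    by (cases h) auto
qed auto

lemma finite_lists_length [simp]: "finite {t :: 'a::finite list. length t = n}"
  using finite_lists_length_eq[of "UNIV :: 'a set" n] by simp

lemma sum_lists_length_Suc:
  "(\<Sum>t | length t = Suc n. g t) = (\<Sum>x\<in>(UNIV :: 'a::finite set). \<Sum>t | length t = n. g (x # t))"
proof -
  have "{t :: 'a list. length t = Suc n} = (\<lambda>(x, t). x # t) ` (UNIV \<times> {t. length t = n})"
    by (auto simp: length_Suc_conv)
  moreover have "inj_on (\<lambda>(x, t). x # t) (UNIV \<times> {t :: 'a list. length t = n})"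
    by (auto simp: inj_on_def)
  ultimately show ?thesis
    by (simp add: sum.reindex sum.cartesian_product case_prod_unfold)
qed

lemma sum_subdiv_prob_Cons_Cons:
  "(\<Sum>t | length t = 2 * length (v # w # h) - 1. subdiv_prob q (v # w # h) t * F t)
     = (\<Sum>x\<in>(UNIV :: 'a::finite set). q v w x *
          (\<Sum>t | length t = 2 * length (w # h) - 1. subdiv_prob q (w # h) t * F (v # x # t)))"
proof -
  define n where "n = 2 * length (w # h) - 1"
  have len: "2 * length (v # w # h) - 1 = Suc (Suc n)"
    by (simp add: n_def)
  have "(\<Sum>t | length t = 2 * length (v # w # h) - 1. subdiv_prob q (v # w # h) t * F t)
      = (\<Sum>y\<in>UNIV. if y = v then (\<Sum>x\<in>UNIV. \<Sum>t | length t = n.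
           q v w x * (subdiv_prob q (w # h) t * F (v # x # t))) else 0)"
    unfolding len sum_lists_length_Suc by (intro sum.cong refl) (simp add: mult.assoc)
  then show ?thesis
    by (simp add: n_def sum_distrib_left)
qed

lemma sum_subdiv_prob:
  fixes q :: "'a::finite \<Rightarrow> 'a \<Rightarrow> 'a \<Rightarrow> real"
  assumes "h \<noteq> []" and "\<And>v w. (v, w) \<in> set (edges h) \<Longrightarrow> (\<Sum>x\<in>UNIV. q v w x) = 1"
  shows "(\<Sum>t | length t = 2 * length h - 1. subdiv_prob q h t) = 1"
  using assms
proof (induction h rule: induct_list012)
  case (2 v)
  then show ?case
    by (simp add: of_bool_def)
next
  case (3 v w h)
  then show ?case
    using sum_subdiv_prob_Cons_Cons[of q v w h "\<lambda>_. 1"] by (simp add: sum_distrib_left[symmetric])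
qed simp

lemma subdiv_prob_count_edges_Cons_Cons:
  "subdiv_prob q (w # h) t * real (count_list (edges (v # x # t)) (a, b))
     = subdiv_prob q (w # h) t
       * (of_bool ((v, x) = (a, b)) + of_bool ((x, w) = (a, b)) + real (count_list (edges t) (a, b)))"
proof (cases "subdiv_prob q (w # h) t = 0")
  case False
  then obtain t' where "t = w # t'"
    using subdiv_prob_nonzeroD[OF False] by (cases t) auto
  then show ?thesis
    by simp
qed simp

lemma subdiv_expected_count_le:
  fixes q :: "'a::finite \<Rightarrow> 'a \<Rightarrow> 'a \<Rightarrow> real"
  assumes "h \<noteq> []"
    and "\<And>v w. (v, w) \<in> set (edges h) \<Longrightarrow> (\<Sum>x\<in>UNIV. q v w x) = 1"
    and "\<And>v w x. (v, w) \<in> set (edges h) \<Longrightarrow> q v w x \<le> \<alpha> v x"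
    and "\<And>v w x. (v, w) \<in> set (edges h) \<Longrightarrow> q v w x \<le> \<beta> w x"
  shows "(\<Sum>t | length t = 2 * length h - 1. subdiv_prob q h t * real (count_list (edges t) (a, b)))
           \<le> real (count_list (butlast h) a) * \<alpha> a b + real (count_list (tl h) b) * \<beta> b a"
  using assms
proof (induction h rule: induct_list012)
  case (2 v)
  have "(\<Sum>t | length t = 1. subdiv_prob q [v] t * real (count_list (edges t) (a, b))) = 0"
    by (intro sum.neutral) (auto simp: length_Suc_conv)
  then show ?case
    by simp
next
  case (3 v w h)
  define n where "n = 2 * length (w # h) - 1"
  define c where "c t = real (count_list (edges t) (a, b))" for t
  let ?E = "\<Sum>t | length t = n. subdiv_prob q (w # h) t * c t"
  have total: "(\<Sum>t | length t = n. subdiv_prob q (w # h) t) = 1"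
    unfolding n_def using "3.prems" by (intro sum_subdiv_prob) auto
  have "(\<Sum>t | length t = 2 * length (v # w # h) - 1. subdiv_prob q (v # w # h) t * c t)
      = (\<Sum>x\<in>UNIV. q v w x * (of_bool ((v, x) = (a, b)) + of_bool ((x, w) = (a, b)) + ?E))"
    unfolding sum_subdiv_prob_Cons_Cons c_def subdiv_prob_count_edges_Cons_Cons
    unfolding c_def[symmetric] n_def[symmetric]
    by (simp add: distrib_left sum.distrib sum_distrib_right[symmetric] total)
  also have "\<dots> = of_bool (v = a) * q v w b + of_bool (w = b) * q v w a + ?E"
    using "3.prems"(2)[of v w] by (simp add: distrib_left sum.distrib sum_distrib_right[symmetric])
  also have "\<dots> \<le> of_bool (v = a) * \<alpha> a b + of_bool (w = b) * \<beta> b a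
      + (real (count_list (butlast (w # h)) a) * \<alpha> a b + real (count_list h b) * \<beta> b a)"
    using "3.IH"(2) "3.prems" by (intro add_mono) (auto simp: c_def n_def)
  also have "\<dots> = real (count_list (butlast (v # w # h)) a) * \<alpha> a b
      + real (count_list (tl (v # w # h)) b) * \<beta> b a"
    by (simp add: algebra_simps)
  finally show ?case
    unfolding c_def .
qed simp

section \<open>Stationary distributions and path sets\<close>

lemma mpow_nonneg: "stochastic P \<Longrightarrow> 0 \<le> mpow P n x y"
  by (induction n arbitrary: y) (auto simp: stochastic_def intro!: sum_nonneg)

lemma stationary_mpow: "stationary P mu \<Longrightarrow> (\<Sum>x\<in>UNIV. mu x * mpow P n x y) = mu y"
proof (induction n arbitrary: y)
  case 0
  then show ?case
    by (simp add: if_distrib cong: if_cong)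
next
  case (Suc n)
  have "(\<Sum>x\<in>UNIV. mu x * mpow P (Suc n) x y) = (\<Sum>z\<in>UNIV. (\<Sum>x\<in>UNIV. mu x * mpow P n x z) * P z y)"
    by (simp add: sum_distrib_left sum_distrib_right mult.assoc) (rule sum.swap)
  also have "\<dots> = mu y"
    using Suc by (simp add: stationary_def)
  finally show ?case .
qed

lemma stationary_pos:
  assumes "stochastic P" and "irreducible_chain P" and "stationary P mu"
  shows "0 < mu y"
proof (rule ccontr)
  assume "\<not> 0 < mu y"
  with assms(3) have "mu y = 0"
    by (simp add: stationary_def order_less_le)
  have "mu x = 0" for x
  proof -
    obtain n where n: "0 < mpow P n x y"
      using assms(2) by (auto simp: irreducible_chain_def)
    have "(\<Sum>x\<in>UNIV. mu x * mpow P n x y) = 0"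
      using stationary_mpow[OF assms(3)] \<open>mu y = 0\<close> by simp
    moreover have "\<forall>x. 0 \<le> mu x * mpow P n x y"
      using assms(3) mpow_nonneg[OF assms(1)] by (simp add: stationary_def)
    ultimately have "mu x * mpow P n x y = 0"
      by (simp add: sum_nonneg_eq_0_iff)
    with n show ?thesis
      by simp
  qed
  then show False
    using assms(3) by (simp add: stationary_def)
qed

lemma stationary_mult_le_1:
  assumes "stochastic P" and "stationary P mu"
  shows "mu x * P x y \<le> 1"
proof -
  have "mu x \<le> 1" "P x y \<le> 1"
    using member_le_sum[of x UNIV mu] member_le_sum[of y UNIV "P x"] assms
    by (auto simp: stochastic_def stationary_def)
  then show ?thesis
    using assms by (simp add: stochastic_def stationary_def mult_le_one)
qed

lemma paths_length_le:
  fixes P :: "'a::finite \<Rightarrow> 'a \<Rightarrow> real"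
  assumes "g \<in> paths P x y"
  shows "length g \<le> 2 * CARD('a \<times> 'a) + 1"
proof -
  have "length (edges g) = (\<Sum>e\<in>UNIV. count_list (edges g) e)"
    by (simp add: sum_count_set)
  also have "\<dots> \<le> (\<Sum>e\<in>(UNIV :: ('a \<times> 'a) set). 2)"
    using assms by (intro sum_mono) (auto simp: paths_def)
  finally show ?thesis
    by (simp add: length_edges)
qed

lemma finite_allpaths: "finite (allpaths (P :: 'a::finite \<Rightarrow> 'a \<Rightarrow> real) P')"
proof (rule finite_subset)
  show "allpaths P P' \<subseteq> {g. set g \<subseteq> UNIV \<and> length g \<le> 2 * CARD('a \<times> 'a) + 1}"
    using paths_length_le by (fastforce simp: allpaths_def)
qed (rule finite_lists_length_le, simp)

lemma mem_allpaths_iff: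
  "g \<in> allpaths P P' \<longleftrightarrow> 0 < P' (hd g) (last g) \<and> g \<in> paths P (hd g) (last g)"
  by (auto simp: allpaths_def paths_def)

lemma paths_subset_allpaths: "0 < P' x y \<Longrightarrow> paths P x y \<subseteq> allpaths P P'"
  by (auto simp: allpaths_def)

section \<open>Rerouting a flow through random midpoints\<close>

definition overlap :: "('a::finite \<Rightarrow> 'a \<Rightarrow> real) \<Rightarrow> ('a \<Rightarrow> real) \<Rightarrow> 'a \<Rightarrow> 'a \<Rightarrow> real" where
  "overlap P mu z w = (\<Sum>x\<in>UNIV. min (P z x) (reversal P mu w x))"

definition midpoint_dist :: "('a::finite \<Rightarrow> 'a \<Rightarrow> real) \<Rightarrow> ('a \<Rightarrow> real) \<Rightarrow> 'a \<Rightarrow> 'a \<Rightarrow> 'a \<Rightarrow> real"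
  where "midpoint_dist P mu z w x = min (P z x) (reversal P mu w x) / overlap P mu z w"

definition rerouted_flow :: "('a::finite \<Rightarrow> 'a \<Rightarrow> real) \<Rightarrow> ('a \<Rightarrow> real) \<Rightarrow> ('a \<Rightarrow> 'a \<Rightarrow> real)
    \<Rightarrow> ('a list \<Rightarrow> real) \<Rightarrow> 'a list \<Rightarrow> real" where
  "rerouted_flow P mu P' f t =
     (\<Sum>\<gamma>\<in>allpaths P P'. f \<gamma> * subdiv_prob (midpoint_dist P mu) (loop_erase \<gamma>) t)"

lemma kappa_nonneg: "0 \<le> kappa P mu P' f"
  unfolding kappa_def by (rule Sup_upper) simp

lemma sum_rerouted_flow:
  "(\<Sum>t\<in>T. rerouted_flow P mu P' f t * g t)
     = (\<Sum>\<gamma>\<in>allpaths P P'. f \<gamma> * (\<Sum>t\<in>T. subdiv_prob (midpoint_dist P mu) (loop_erase \<gamma>) t * g t))"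
  unfolding rerouted_flow_def sum_distrib_left sum_distrib_right by (subst sum.swap) (simp add: mult_ac)

locale rerouting =
  fixes P :: "'a::finite \<Rightarrow> 'a \<Rightarrow> real" and mu :: "'a \<Rightarrow> real"
    and P' :: "'a \<Rightarrow> 'a \<Rightarrow> real" and mu' :: "'a \<Rightarrow> real"
    and f :: "'a list \<Rightarrow> real" and k :: real
  assumes stochastic: "stochastic P"
    and mu_pos: "0 < mu x"
    and flow: "is_flow P P' mu' f"
    and demand_le_1: "mu' x * P' x y \<le> 1"
    and kappa_le: "kappa P mu P' f \<le> ereal k"
begin

lemma P_nonneg: "0 \<le> P x y"
  using stochastic by (simp add: stochastic_def)

lemma reversal_nonneg: "0 \<le> reversal P mu w x"
  using P_nonneg mu_pos[of x] mu_pos[of w] by (simp add: reversal_def)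

lemma flow_nonneg: "\<gamma> \<in> allpaths P P' \<Longrightarrow> 0 \<le> f \<gamma>"
  using flow by (simp add: is_flow_def)

lemma k_nonneg: "0 \<le> k"
  using order_trans[OF kappa_nonneg kappa_le] by simp

lemma midpoint_dist_nonneg: "0 \<le> midpoint_dist P mu z w x"
  using P_nonneg reversal_nonneg
  by (simp add: midpoint_dist_def overlap_def sum_nonneg)

lemma midpoint_dist_nonzeroD:
  assumes "midpoint_dist P mu z w x \<noteq> 0"
  shows "0 < P z x \<and> 0 < P x w"
proof -
  have "min (P z x) (reversal P mu w x) \<noteq> 0"
    using assms by (auto simp: midpoint_dist_def)
  then have "0 < P z x" and "0 < reversal P mu w x"
    using P_nonneg[of z x] reversal_nonneg[of w x] by linarith+
  then show ?thesis
    using mu_pos[of x] mu_pos[of w] P_nonneg[of x w]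
    by (auto simp: reversal_def zero_less_divide_iff zero_less_mult_iff)
qed

lemma congA_edge_pos:
  assumes "\<gamma> \<in> allpaths P P'" and "0 < f \<gamma>" and "(v, w) \<in> set (edges \<gamma>)"
  shows "0 < congA_edge P mu P' f v w"
proof -
  have "0 < P v w"
    using assms(1,3) by (auto simp: allpaths_def paths_def)
  have "0 < count_list (edges \<gamma>) (v, w)" and "0 < plen \<gamma>"
    using assms(3) count_list_0_iff[of "edges \<gamma>" "(v, w)"] length_pos_if_in_set[OF assms(3)]
    by (auto simp: plen_def length_edges)
  then have "0 < real (count_list (edges \<gamma>) (v, w)) * real (plen \<gamma>) * f \<gamma>"
    using assms(2) by simp
  also have "\<dots> \<le> (\<Sum>g\<in>{g\<in>allpaths P P'. (v, w) \<in> set (edges g)}.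
      real (count_list (edges g) (v, w)) * real (plen g) * f g)"
    using assms flow_nonneg by (intro member_le_sum) (auto intro: rev_finite_subset[OF finite_allpaths])
  finally show ?thesis
    using \<open>0 < P v w\<close> mu_pos[of v] by (simp add: congA_edge_def)
qed

lemma midpoint_dist_congested:
  assumes "0 < P z w" and "0 < congA_edge P mu P' f z w"
  shows "(\<Sum>x\<in>UNIV. midpoint_dist P mu z w x) = 1"
    and "midpoint_dist P mu z w x \<le> k * P z x"
    and "midpoint_dist P mu z w x \<le> k * reversal P mu w x"
proof -
  have "einv (overlap P mu z w) \<le> kappa P mu P' f"
    unfolding kappa_def overlap_def by (rule Sup_upper) (use assms in blast)
  then have "einv (overlap P mu z w) \<le> ereal k"
    using kappa_le by (rule order_trans)
  then have pos: "overlap P mu z w \<noteq> 0" and inv: "1 / overlap P mu z w \<le> k"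
    by (auto simp: einv_def split: if_splits)
  show "(\<Sum>x\<in>UNIV. midpoint_dist P mu z w x) = 1"
    using pos by (simp add: midpoint_dist_def overlap_def flip: sum_divide_distrib)
  have "midpoint_dist P mu z w x = min (P z x) (reversal P mu w x) * (1 / overlap P mu z w)"
    by (simp add: midpoint_dist_def)
  also have "\<dots> \<le> min (P z x) (reversal P mu w x) * k"
    using inv P_nonneg reversal_nonneg by (intro mult_left_mono) auto
  finally have "midpoint_dist P mu z w x \<le> k * min (P z x) (reversal P mu w x)"
    by (simp add: mult.commute)
  then show "midpoint_dist P mu z w x \<le> k * P z x"
    and "midpoint_dist P mu z w x \<le> k * reversal P mu w x"
    using mult_left_mono[OF min.cobounded1 k_nonneg, of "P z x" "reversal P mu w x"]
      mult_left_mono[OF min.cobounded2 k_nonneg, of "P z x" "reversal P mu w x"]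
    by linarith+
qed

lemma finite_paths: "0 < P' x y \<Longrightarrow> finite (paths P x y)"
  using finite_allpaths paths_subset_allpaths[where P' = P'] by (rule finite_subset[rotated])

lemma subdiv_midpoint_nonneg: "0 \<le> subdiv_prob (midpoint_dist P mu) h t"
  by (rule subdiv_prob_nonneg) (rule midpoint_dist_nonneg)

lemma subdiv_in_paths:
  assumes "distinct h" and "subdiv_prob (midpoint_dist P mu) h t \<noteq> 0"
  shows "t \<in> paths P (hd h) (last h)"
proof -
  have "0 < P a b" if "(a, b) \<in> set (edges t)" for a b
    using edges_subdiv_probD[OF assms(2) that] midpoint_dist_nonzeroD by blast
  moreover have "count_list (edges t) (a, b) \<le> 2" for a b
  proof -
    have "count_list (butlast h) a \<le> 1" and "count_list (tl h) b \<le> 1"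
      using assms(1) by (simp_all add: distinct_count_list distinct_butlast distinct_tl)
    with count_edges_subdiv_le[OF assms(2), of a b] show ?thesis
      by linarith
  qed
  ultimately show ?thesis
    using subdiv_prob_nonzeroD[OF assms(2)] by (auto simp: paths_def)
qed

lemma subdiv_loop_erase_in_paths:
  assumes "\<gamma> \<in> allpaths P P'" and "subdiv_prob (midpoint_dist P mu) (loop_erase \<gamma>) t \<noteq> 0"
  shows "t \<in> paths P (hd \<gamma>) (last \<gamma>)" and "t \<in> allpaths P P'"
proof -
  have "\<gamma> \<noteq> []"
    using assms(1) by (auto simp: allpaths_def paths_def)
  then show "t \<in> paths P (hd \<gamma>) (last \<gamma>)"
    using subdiv_in_paths[OF distinct_loop_erase assms(2)] by (simp add: hd_loop_erase last_loop_erase)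
  then show "t \<in> allpaths P P'"
    using assms(1) by (auto simp: mem_allpaths_iff paths_def)
qed

lemma loop_erase_edge_congested:
  assumes "\<gamma> \<in> allpaths P P'" and "0 < f \<gamma>" and "(v, w) \<in> set (edges (loop_erase \<gamma>))"
  shows "0 < P v w" and "0 < congA_edge P mu P' f v w"
proof -
  have "(v, w) \<in> set (edges \<gamma>)"
    using assms(3) edges_loop_erase_subset by blast
  then show "0 < P v w" and "0 < congA_edge P mu P' f v w"
    using assms(1,2) congA_edge_pos by (auto simp: allpaths_def paths_def)
qed

lemma sum_subdiv_loop_erase:
  assumes "\<gamma> \<in> allpaths P P'" and "0 < f \<gamma>"
  shows "(\<Sum>t | length t = 2 * length (loop_erase \<gamma>) - 1.
           subdiv_prob (midpoint_dist P mu) (loop_erase \<gamma>) t) = 1"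
proof (rule sum_subdiv_prob)
  show "loop_erase \<gamma> \<noteq> []"
    using assms(1) by (auto simp: allpaths_def paths_def)
qed (use assms loop_erase_edge_congested midpoint_dist_congested(1) in blast)

lemma sum_paths_subdiv_loop_erase:
  assumes "\<gamma> \<in> allpaths P P'" and "0 < f \<gamma>" and "0 < P' x y"
  shows "(\<Sum>t\<in>paths P x y. subdiv_prob (midpoint_dist P mu) (loop_erase \<gamma>) t)
           = of_bool (\<gamma> \<in> paths P x y)"
proof (cases "\<gamma> \<in> paths P x y")
  case True
  then have "hd \<gamma> = x" and "last \<gamma> = y"
    by (auto simp: paths_def)
  have "(\<Sum>t\<in>paths P x y. subdiv_prob (midpoint_dist P mu) (loop_erase \<gamma>) t)
      = (\<Sum>t | length t = 2 * length (loop_erase \<gamma>) - 1.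
           subdiv_prob (midpoint_dist P mu) (loop_erase \<gamma>) t)"
    using subdiv_loop_erase_in_paths(1)[OF assms(1)] subdiv_prob_nonzeroD \<open>hd \<gamma> = x\<close> \<open>last \<gamma> = y\<close>
    by (intro sum.mono_neutral_cong) (auto simp: finite_paths[OF assms(3)])
  with True show ?thesis
    using sum_subdiv_loop_erase[OF assms(1,2)] by simp
next
  case False
  have "subdiv_prob (midpoint_dist P mu) (loop_erase \<gamma>) t = 0" if "t \<in> paths P x y" for t
  proof (rule ccontr)
    assume "subdiv_prob (midpoint_dist P mu) (loop_erase \<gamma>) t \<noteq> 0"
    then have "t \<in> paths P (hd \<gamma>) (last \<gamma>)"
      by (rule subdiv_loop_erase_in_paths(1)[OF assms(1)])
    with that have "hd \<gamma> = x" and "last \<gamma> = y"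
      by (auto simp: paths_def)
    with False assms(1) show False
      by (simp add: mem_allpaths_iff)
  qed
  with False show ?thesis
    by simp
qed

lemma rerouted_flow_nonneg: "0 \<le> rerouted_flow P mu P' f t"
  unfolding rerouted_flow_def
  using flow_nonneg subdiv_midpoint_nonneg by (auto intro!: sum_nonneg)

lemma sum_paths_rerouted_flow:
  assumes "0 < P' x y"
  shows "(\<Sum>t\<in>paths P x y. rerouted_flow P mu P' f t) = mu' x * P' x y"
proof -
  have "(\<Sum>t\<in>paths P x y. rerouted_flow P mu P' f t)
      = (\<Sum>\<gamma>\<in>allpaths P P'. f \<gamma> * (\<Sum>t\<in>paths P x y. subdiv_prob (midpoint_dist P mu) (loop_erase \<gamma>) t))"
    using sum_rerouted_flow[where g = "\<lambda>_. 1"] by simp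
  also have "\<dots> = (\<Sum>\<gamma>\<in>allpaths P P'. if \<gamma> \<in> paths P x y then f \<gamma> else 0)"
  proof (rule sum.cong)
    fix \<gamma> assume "\<gamma> \<in> allpaths P P'"
    then show "f \<gamma> * (\<Sum>t\<in>paths P x y. subdiv_prob (midpoint_dist P mu) (loop_erase \<gamma>) t)
        = (if \<gamma> \<in> paths P x y then f \<gamma> else 0)"
      using flow_nonneg[of \<gamma>] sum_paths_subdiv_loop_erase[OF _ _ assms]
      by (cases "f \<gamma> = 0") auto
  qed simp
  also have "\<dots> = (\<Sum>\<gamma>\<in>{\<gamma>\<in>allpaths P P'. \<gamma> \<in> paths P x y}. f \<gamma>)"
    by (rule sum.inter_filter[OF finite_allpaths, symmetric])
  also have "{\<gamma>\<in>allpaths P P'. \<gamma> \<in> paths P x y} = paths P x y"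
    using paths_subset_allpaths[of P' x y P] assms by blast
  also have "(\<Sum>\<gamma>\<in>paths P x y. f \<gamma>) = mu' x * P' x y"
    using flow assms by (simp add: is_flow_def)
  finally show ?thesis .
qed

lemma rerouted_flow_is_flow: "is_flow P P' mu' (rerouted_flow P mu P' f)"
  unfolding is_flow_def
proof (intro conjI ballI allI impI)
  fix t assume "t \<in> allpaths P P'"
  then have pos: "0 < P' (hd t) (last t)" and t: "t \<in> paths P (hd t) (last t)"
    by (simp_all add: mem_allpaths_iff)
  show "0 \<le> rerouted_flow P mu P' f t"
    by (rule rerouted_flow_nonneg)
  have "rerouted_flow P mu P' f t \<le> (\<Sum>t'\<in>paths P (hd t) (last t). rerouted_flow P mu P' f t')"
    using t rerouted_flow_nonneg finite_paths[OF pos] by (intro member_le_sum) auto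
  also have "\<dots> \<le> 1"
    using sum_paths_rerouted_flow[OF pos] demand_le_1 by simp
  finally show "rerouted_flow P mu P' f t \<le> 1" .
qed (rule sum_paths_rerouted_flow)

lemma congB_state_sum_le:
  "(\<Sum>\<gamma>\<in>{\<gamma>\<in>allpaths P P'. z \<in> set \<gamma>}. real (plen \<gamma>) * f \<gamma>) \<le> mu z * congB P mu P' f"
proof -
  have "congB_state P mu P' f z \<le> congB P mu P' f"
    unfolding congB_def by (rule Max_ge) auto
  then show ?thesis
    using mu_pos[of z] by (simp add: congB_state_def divide_le_eq mult.commute)
qed

lemma congB_nonneg: "0 \<le> congB P mu P' f"
proof -
  have "0 \<le> congB_state P mu P' f z" for z
    using mu_pos[of z] flow_nonneg by (auto simp: congB_state_def intro!: divide_nonneg_pos sum_nonneg)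
  moreover have "congB_state P mu P' f z \<le> congB P mu P' f" for z
    unfolding congB_def by (rule Max_ge) auto
  ultimately show ?thesis
    by (meson order_trans)
qed

lemma sum_allpaths_subdiv_loop_erase:
  assumes "\<gamma> \<in> allpaths P P'"
  shows "(\<Sum>t\<in>allpaths P P'. subdiv_prob (midpoint_dist P mu) (loop_erase \<gamma>) t * (g t * real (plen t)))
    = 2 * real (plen (loop_erase \<gamma>))
      * (\<Sum>t | length t = 2 * length (loop_erase \<gamma>) - 1. subdiv_prob (midpoint_dist P mu) (loop_erase \<gamma>) t * g t)"
proof -
  define h where "h = loop_erase \<gamma>"
  define W where "W = subdiv_prob (midpoint_dist P mu) h"
  have "h \<noteq> []"
    using assms by (auto simp: h_def allpaths_def paths_def)
  then have plen: "plen t = 2 * plen h" if "length t = 2 * length h - 1" for t :: "'a list"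
    using that by (cases h) (simp_all add: plen_def)
  have "(\<Sum>t\<in>allpaths P P'. W t * (g t * real (plen t)))
      = (\<Sum>t | length t = 2 * length h - 1. W t * (g t * real (plen t)))"
    using subdiv_loop_erase_in_paths(2)[OF assms] subdiv_prob_nonzeroD
    by (intro sum.mono_neutral_cong) (auto simp: W_def h_def finite_allpaths)
  also have "\<dots> = (\<Sum>t | length t = 2 * length h - 1. 2 * real (plen h) * (W t * g t))"
    by (intro sum.cong) (auto simp: plen)
  finally show ?thesis
    by (simp add: W_def h_def sum_distrib_left)
qed

lemma weighted_count_subdiv_loop_erase_le:
  assumes "\<gamma> \<in> allpaths P P'" and "0 < f \<gamma>"
  shows "(\<Sum>t\<in>allpaths P P'. subdiv_prob (midpoint_dist P mu) (loop_erase \<gamma>) t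
            * (real (count_list (edges t) (a, b)) * real (plen t)))
         \<le> 2 * real (plen \<gamma>)
            * (of_bool (a \<in> set \<gamma>) * (k * P a b) + of_bool (b \<in> set \<gamma>) * (k * reversal P mu b a))"
proof -
  define h where "h = loop_erase \<gamma>"
  let ?E = "\<Sum>t | length t = 2 * length h - 1.
    subdiv_prob (midpoint_dist P mu) h t * real (count_list (edges t) (a, b))"
  have "?E \<le> real (count_list (butlast h) a) * (k * P a b)
      + real (count_list (tl h) b) * (k * reversal P mu b a)"
    using loop_erase_edge_congested[OF assms] midpoint_dist_congested assms(1)
    by (intro subdiv_expected_count_le) (auto simp: h_def allpaths_def paths_def)
  also have "\<dots> \<le> of_bool (a \<in> set \<gamma>) * (k * P a b) + of_bool (b \<in> set \<gamma>) * (k * reversal P mu b a)"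
    using count_butlast_loop_erase_le[of \<gamma> a] count_tl_loop_erase_le[of \<gamma> b]
      k_nonneg P_nonneg[of a b] reversal_nonneg[of b a]
    by (intro add_mono mult_right_mono) (auto simp: h_def)
  finally have "?E \<le> \<dots>" .
  moreover have "plen h \<le> plen \<gamma>"
    using length_loop_erase_le[of \<gamma>] by (simp add: h_def plen_def)
  moreover have "0 \<le> ?E"
    by (auto simp: subdiv_midpoint_nonneg intro!: sum_nonneg)
  ultimately show ?thesis
    unfolding sum_allpaths_subdiv_loop_erase[OF assms(1)] h_def by (intro mult_mono) auto
qed

lemma congA_edge_rerouted_le:
  assumes "0 < P a b"
  shows "congA_edge P mu P' (rerouted_flow P mu P' f) a b \<le> 4 * k * congB P mu P' f"
proof -
  define c where "c t = real (count_list (edges t) (a, b)) * real (plen t)" for t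
  define S where "S z = (\<Sum>\<gamma>\<in>{\<gamma>\<in>allpaths P P'. z \<in> set \<gamma>}. real (plen \<gamma>) * f \<gamma>)" for z
  define B where "B = congB P mu P' f"
  define R where "R = reversal P mu b a"
  have "(\<Sum>t\<in>{t\<in>allpaths P P'. (a, b) \<in> set (edges t)}.
        real (count_list (edges t) (a, b)) * real (plen t) * rerouted_flow P mu P' f t)
      = (\<Sum>t\<in>allpaths P P'. rerouted_flow P mu P' f t * c t)"
    by (rule sum.mono_neutral_cong_left) (auto simp: c_def finite_allpaths)
  also have "\<dots> = (\<Sum>\<gamma>\<in>allpaths P P'. f \<gamma> *
      (\<Sum>t\<in>allpaths P P'. subdiv_prob (midpoint_dist P mu) (loop_erase \<gamma>) t * c t))"
    by (rule sum_rerouted_flow)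
  also have "\<dots> \<le> (\<Sum>\<gamma>\<in>allpaths P P'. f \<gamma> *
      (2 * real (plen \<gamma>) * (of_bool (a \<in> set \<gamma>) * (k * P a b) + of_bool (b \<in> set \<gamma>) * (k * R))))"
  proof (rule sum_mono)
    fix \<gamma> assume "\<gamma> \<in> allpaths P P'"
    then show "f \<gamma> * (\<Sum>t\<in>allpaths P P'. subdiv_prob (midpoint_dist P mu) (loop_erase \<gamma>) t * c t)
        \<le> f \<gamma> * (2 * real (plen \<gamma>) * (of_bool (a \<in> set \<gamma>) * (k * P a b) + of_bool (b \<in> set \<gamma>) * (k * R)))"
      using flow_nonneg[of \<gamma>] weighted_count_subdiv_loop_erase_le[of \<gamma> a b]
      by (cases "f \<gamma> = 0") (auto simp: c_def R_def intro: mult_left_mono)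
  qed
  also have "\<dots> = (\<Sum>\<gamma>\<in>allpaths P P'. 2 * k * P a b * (if a \<in> set \<gamma> then real (plen \<gamma>) * f \<gamma> else 0)
      + 2 * k * R * (if b \<in> set \<gamma> then real (plen \<gamma>) * f \<gamma> else 0))"
    by (intro sum.cong refl) (simp add: algebra_simps)
  also have "\<dots> = 2 * k * P a b * S a + 2 * k * R * S b"
    by (simp add: S_def sum.distrib sum.inter_filter[OF finite_allpaths] flip: sum_distrib_left)
  also have "\<dots> \<le> 2 * k * P a b * (mu a * B) + 2 * k * R * (mu b * B)"
    using k_nonneg P_nonneg[of a b] reversal_nonneg[of b a] congB_state_sum_le
    by (intro add_mono mult_left_mono) (auto simp: S_def B_def R_def)
  also have "\<dots> = 4 * k * B * (mu a * P a b)"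
    using mu_pos[of b] by (simp add: R_def reversal_def algebra_simps)
  finally show ?thesis
    using mu_pos[of a] assms by (simp add: congA_edge_def B_def divide_le_eq mult.commute)
qed

lemma ex_positive_transition: "\<exists>z w. 0 < P z w"
proof -
  fix z
  have "sum (P z) UNIV = 1"
    using stochastic by (simp add: stochastic_def)
  then obtain w where "P z w \<noteq> 0"
    by (metis sum.neutral zero_neq_one)
  then show ?thesis
    using P_nonneg[of z w] by (auto simp: order_less_le)
qed

lemma congA_rerouted_le: "congA P mu P' (rerouted_flow P mu P' f) \<le> 4 * k * congB P mu P' f"
  unfolding congA_def using ex_positive_transition congA_edge_rerouted_le by (subst Max_le_iff) auto

end

theorem lemma27:
  fixes P P' :: "'a::finite \<Rightarrow> 'a \<Rightarrow> real"
    and mu mu' :: "'a \<Rightarrow> real"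
    and f :: "'a list \<Rightarrow> real"
  assumes "ergodic P" and "ergodic P'"
    and "stationary P mu" and "stationary P' mu'"
    and "is_flow P P' mu' f"
    and "kappa P mu P' f < \<infinity>"
  shows "\<exists>f'. is_flow P P' mu' f' \<and>
           ereal (congA P mu P' f') \<le> 8 * kappa P mu P' f * ereal (congB P mu P' f)"
proof -
  obtain k where k: "kappa P mu P' f = ereal k"
    using kappa_nonneg[of P mu P' f] assms(6) by (cases "kappa P mu P' f") auto
  interpret rerouting P mu P' mu' f k
  proof
    show "stochastic P" and "0 < mu x" for x
      using assms(1,3) stationary_pos by (auto simp: ergodic_def)
    show "mu' x * P' x y \<le> 1" for x y
      using assms(2,4) stationary_mult_le_1 by (auto simp: ergodic_def)
  qed (use assms(5) k in auto)
  have "congA P mu P' (rerouted_flow P mu P' f) \<le> 8 * k * congB P mu P' f"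
    using congA_rerouted_le mult_nonneg_nonneg[OF k_nonneg congB_nonneg] by simp
  then show ?thesis
    using rerouted_flow_is_flow k by auto
qed

end
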